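(* Let $q\ge2$, $r\ge1$, $\rho\ge2$, $s\ge1$ be integers, $N=r+\rho-1$, $n=sN$, and $\mathcal{R}_{t+1}=\{tN+1,\dots,(t+1)N\}$ for $t=0,\dots,s-1$. Let $\mathcal{C}\subseteq Q^n$ ($|Q|=q$) be a code of cardinality $q^k$ with minimum distance $d$ such that $\mathcal{C}|_{\mathcal{R}_i}$ has minimum distance at least $\rho$ for all $i=1,\dots,s$. Write $d=tN+\partial$ with integers $t\ge0$ and $1\le\partial\le N$. Then $$k\le\begin{cases} r(s-t)+\rho-\partial & \text{if } \rho\le\partial,\\ r(s-t) & \text{if } \rho>\partial.\end{cases}$$
   Context: Minimum distance refers to Hamming distance; $\mathcal{C}|_{\mathcal{R}_i}$ is the projection of $\mathcal{C}$ onto the coordinates in $\mathcal{R}_i$. *)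

theory Defs
  imports Complex_Main "HOL-Library.FuncSet"
begin

text \<open>Words of length n over alphabet Q are extensional functions on the
coordinate set {1..n}, i.e. elements of PiE {1..n} (\<lambda>_. Q).\<close>

definition hdist :: "nat set \<Rightarrow> (nat \<Rightarrow> 'a) \<Rightarrow> (nat \<Rightarrow> 'a) \<Rightarrow> nat" where
  "hdist I x y = card {i \<in> I. x i \<noteq> y i}"

definition has_min_dist :: "nat set \<Rightarrow> (nat \<Rightarrow> 'a) set \<Rightarrow> nat \<Rightarrow> bool" where
  "has_min_dist I C d \<longleftrightarrow>
     (\<exists>x\<in>C. \<exists>y\<in>C. x \<noteq> y \<and> hdist I x y = d) \<and>
     (\<forall>x\<in>C. \<forall>y\<in>C. x \<noteq> y \<longrightarrow> d \<le> hdist I x y)"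

definition min_dist_ge :: "nat set \<Rightarrow> (nat \<Rightarrow> 'a) set \<Rightarrow> nat \<Rightarrow> bool" where
  "min_dist_ge I C d \<longleftrightarrow> (\<forall>x\<in>C. \<forall>y\<in>C. x \<noteq> y \<longrightarrow> d \<le> hdist I x y)"

definition proj :: "nat set \<Rightarrow> (nat \<Rightarrow> 'a) set \<Rightarrow> (nat \<Rightarrow> 'a) set" where
  "proj R C = (\<lambda>x. restrict x R) ` C"

definition block :: "nat \<Rightarrow> nat \<Rightarrow> nat set" where
  "block N i = {(i - 1) * N + 1 .. i * N}"

end

theory Submission
  imports Defs
begin

text \<open>Call the last \<open>r = N + 1 - \<rho>\<close> coordinates of a block its top. Two codewords agreeing on
  all coordinates from \<open>d\<close> on are equal, since they then differ in fewer than \<open>d\<close> places.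
  Inside a block the top already determines the rest: if the bottom \<open>\<rho> - 1\<close> coordinates were
  all that differed, the projection onto the block would have distance below \<open>\<rho>\<close>. Hence
  a codeword is determined by its entries on the block tops beyond position \<open>d = tN + \<delta>\<close>;
  there are at most \<open>N + 1 - max \<delta> \<rho>\<close> of them in block \<open>t + 1\<close> and \<open>r\<close> in each of the
  \<open>s - t - 1\<close> later blocks, which bounds \<open>|C| = q\<^sup>k\<close>.\<close>

lemma hdist_le_card:
  assumes "finite I"
  shows "hdist I x y \<le> card I"
  unfolding hdist_def using assms by (intro card_mono) auto

lemma has_min_dist_le_card:
  assumes "has_min_dist I C d" "finite I"
  shows "d \<le> card I"
  using assms hdist_le_card unfolding has_min_dist_def by fastforce

lemma min_dist_ge_eq_if_agree_off:
  assumes "min_dist_ge I C d" "x \<in> C" "y \<in> C"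
    and "finite D" "card D < d" "\<forall>j\<in>I - D. x j = y j"
  shows "x = y"
proof (rule ccontr)
  assume "x \<noteq> y"
  then have "d \<le> hdist I x y"
    using assms(1-3) unfolding min_dist_ge_def by blast
  also have "\<dots> \<le> card D"
    unfolding hdist_def using assms(4,6) by (intro card_mono) auto
  finally show False using assms(5) by simp
qed

lemma proj_min_dist_ge_agree_on:
  assumes "min_dist_ge B (proj B C) d" "x \<in> C" "y \<in> C"
    and "finite D" "card D < d" "\<forall>j\<in>B - D. x j = y j" "j \<in> B"
  shows "x j = y j"
proof -
  have "restrict x B = restrict y B"
  proof (rule min_dist_ge_eq_if_agree_off[OF assms(1) _ _ assms(4,5)])
    show "restrict x B \<in> proj B C" "restrict y B \<in> proj B C"
      using assms(2,3) by (auto simp: proj_def)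
    show "\<forall>j\<in>B - D. restrict x B j = restrict y B j"
      using assms(6) by simp
  qed
  then show ?thesis using assms(7) by (metis restrict_apply')
qed

lemma card_le_power_if_inj_on_restrict:
  assumes "C \<subseteq> PiE I (\<lambda>_. Q)" "S \<subseteq> I" "finite S" "finite Q"
    and "inj_on (\<lambda>x. restrict x S) C"
  shows "card C \<le> card Q ^ card S"
proof -
  have "(\<lambda>x. restrict x S) ` C \<subseteq> PiE S (\<lambda>_. Q)"
    using assms(1,2) by (fastforce simp: PiE_iff)
  then have "card C \<le> card (PiE S (\<lambda>_. Q))"
    using assms(3-5) by (intro card_inj_on_le) (auto simp: finite_PiE)
  then show ?thesis by (simp add: card_PiE assms(3))
qed

lemma in_some_block:
  assumes "N > 0" "j \<in> {1..s * N}"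
  obtains i where "i \<in> {1..s}" "j \<in> block N i"
proof
  define a where "a = (j - 1) div N"
  have "j - 1 = a * N + (j - 1) mod N" "(j - 1) mod N < N"
    unfolding a_def using assms(1) by simp_all
  then show "j \<in> block N (a + 1)"
    using assms(2) unfolding block_def by auto
  have "a < s"
    unfolding a_def using assms(2) by (intro less_mult_imp_div_less) auto
  then show "a + 1 \<in> {1..s}" by simp
qed

definition block_top :: "nat \<Rightarrow> nat \<Rightarrow> nat \<Rightarrow> nat set" where
  "block_top N \<rho> i = {(i - 1) * N + \<rho> .. i * N}"

definition info_set :: "nat \<Rightarrow> nat \<Rightarrow> nat \<Rightarrow> nat \<Rightarrow> nat set" where
  "info_set N \<rho> s d = {d .. s * N} \<inter> (\<Union>i\<in>{1..s}. block_top N \<rho> i)"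

lemma finite_info_set: "finite (info_set N \<rho> s d)"
  unfolding info_set_def by simp

lemma eq_if_agree_on_info_set:
  assumes "min_dist_ge {1..s * N} C d" "d \<ge> 1"
    and blocks: "\<forall>i\<in>{1..s}. min_dist_ge (block N i) (proj (block N i) C) \<rho>"
    and "1 \<le> \<rho>" "N > 0"
    and "x \<in> C" "y \<in> C" and agree: "\<forall>j\<in>info_set N \<rho> s d. x j = y j"
  shows "x = y"
proof -
  have tail: "x j = y j" if j: "j \<in> {d .. s * N}" for j
  proof -
    obtain i where i: "i \<in> {1..s}" "j \<in> block N i"
      using in_some_block[of N j s] j assms(2,5) by auto
    show ?thesis
    proof (cases "j \<in> block_top N \<rho> i")
      case True
      then show ?thesis using agree i j unfolding info_set_def by blast
    next
      case False
      let ?bottom = "{(i - 1) * N + 1 ..< (i - 1) * N + \<rho>}"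
      have "block_top N \<rho> i \<subseteq> {d .. s * N}"
      proof -
        have "i * N \<le> s * N" using i by simp
        moreover have "d \<le> (i - 1) * N + \<rho>" using False i j by (auto simp: block_top_def block_def)
        ultimately show ?thesis unfolding block_top_def by auto
      qed
      then have "block_top N \<rho> i \<subseteq> info_set N \<rho> s d"
        using i unfolding info_set_def by blast
      moreover have "block N i - ?bottom \<subseteq> block_top N \<rho> i"
        unfolding block_def block_top_def by auto
      ultimately have "\<forall>l\<in>block N i - ?bottom. x l = y l"
        using agree by blast
      then show ?thesis
        using proj_min_dist_ge_agree_on[of "block N i" C \<rho> x y ?bottom j] blocks i assms(4,6,7)
        by auto
    qed
  qed
  show ?thesis
    using assms(1) \<open>x \<in> C\<close> \<open>y \<in> C\<close>
    by (rule min_dist_ge_eq_if_agree_off[where D = "{1..<d}"]) (use tail assms(2) in auto)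
qed

lemma inj_on_restrict_info_set:
  assumes "min_dist_ge {1..s * N} C d" "d \<ge> 1"
    and "\<forall>i\<in>{1..s}. min_dist_ge (block N i) (proj (block N i) C) \<rho>"
    and "1 \<le> \<rho>" "N > 0"
  shows "inj_on (\<lambda>x. restrict x (info_set N \<rho> s d)) C"
proof (rule inj_onI)
  fix x y
  assume "x \<in> C" "y \<in> C" "restrict x (info_set N \<rho> s d) = restrict y (info_set N \<rho> s d)"
  then have "\<forall>j\<in>info_set N \<rho> s d. x j = y j"
    by (metis restrict_apply')
  then show "x = y"
    using eq_if_agree_on_info_set[OF assms \<open>x \<in> C\<close> \<open>y \<in> C\<close>] by blast
qed

lemma card_block_top:
  assumes "1 \<le> i"
  shows "card (block_top N \<rho> i) = N + 1 - \<rho>"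
  using assms unfolding block_top_def by (cases i) (auto simp: algebra_simps)

lemma card_info_set_le:
  assumes "d = t * N + \<delta>" "1 \<le> \<delta>" "t < s"
  shows "card (info_set N \<rho> s d) \<le> (N + 1 - max \<delta> \<rho>) + (s - t - 1) * (N + 1 - \<rho>)"
proof -
  let ?first = "{t * N + max \<delta> \<rho> .. t * N + N}"
  let ?later = "\<Union>i\<in>{t + 2..s}. block_top N \<rho> i"
  have "info_set N \<rho> s d \<subseteq> ?first \<union> ?later"
  proof
    fix j assume "j \<in> info_set N \<rho> s d"
    then obtain i where i: "i \<in> {1..s}" "j \<in> block_top N \<rho> i" "d \<le> j"
      unfolding info_set_def by auto
    have "t < i"
    proof (rule ccontr)
      assume "\<not> t < i"
      then have "i * N \<le> t * N" by simp
      moreover have "j \<le> i * N" using i(2) by (simp add: block_top_def)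
      ultimately show False using i(3) assms(1,2) by linarith
    qed
    then consider "i = t + 1" | "i \<in> {t + 2..s}" using i(1) by fastforce
    then show "j \<in> ?first \<union> ?later"
    proof cases
      case 1
      then have "j \<in> ?first" using i(2,3) assms(1) by (auto simp: block_top_def)
      then show ?thesis ..
    next
      case 2
      then show ?thesis using i(2) by blast
    qed
  qed
  moreover have "finite ?later" by (simp add: block_top_def)
  ultimately have "card (info_set N \<rho> s d) \<le> card (?first \<union> ?later)"
    by (intro card_mono) auto
  also have "\<dots> \<le> card ?first + card ?later"
    by (rule card_Un_le)
  also have "card ?later \<le> (\<Sum>i\<in>{t + 2..s}. card (block_top N \<rho> i))"
    by (rule card_UN_le) simp
  also have "\<dots> = (s - t - 1) * (N + 1 - \<rho>)"
    by (simp add: card_block_top)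
  finally show ?thesis by simp
qed

lemma le_of_powr_le_power:
  assumes "q \<ge> 2" "real q powr k \<le> real (q ^ e)"
  shows "k \<le> real e"
  using assms by (simp add: powr_realpow[symmetric])

lemma of_nat_bound_eq:
  assumes "N = r + \<rho> - 1" "1 \<le> \<rho>" "\<delta> \<le> N" "t < s"
  shows "real ((N + 1 - max \<delta> \<rho>) + (s - t - 1) * r) = (if \<rho> \<le> \<delta>
               then real r * (real s - real t) + real \<rho> - real \<delta>
               else real r * (real s - real t))"
proof -
  have "real (N + 1 - max \<delta> \<rho>) =
      (if \<rho> \<le> \<delta> then real r + real \<rho> - real \<delta> else real r)"
    using assms(1-3) by (simp add: max_def of_nat_diff)
  moreover have "real (s - t - 1) = real s - real t - 1"
    using assms(4) by (simp add: of_nat_diff)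
  ultimately have "real ((N + 1 - max \<delta> \<rho>) + (s - t - 1) * r) =
      (if \<rho> \<le> \<delta> then real r + real \<rho> - real \<delta> else real r) + (real s - real t - 1) * real r"
    by (simp only: of_nat_add of_nat_mult)
  then show ?thesis
    by (cases "\<rho> \<le> \<delta>") (simp_all add: algebra_simps)
qed

theorem mainTheorem7:
  fixes Q :: "'a set" and C :: "(nat \<Rightarrow> 'a) set"
    and q r \<rho> s N n d t \<delta> :: nat and k :: real
  assumes "q \<ge> 2" "r \<ge> 1" "\<rho> \<ge> 2" "s \<ge> 1"
    and "N = r + \<rho> - 1" "n = s * N"
    and "finite Q" "card Q = q"
    and "C \<subseteq> PiE {1..n} (\<lambda>_. Q)"
    and "real (card C) = real q powr k"
    and "has_min_dist {1..n} C d"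
    and "\<forall>i\<in>{1..s}. min_dist_ge (block N i) (proj (block N i) C) \<rho>"
    and "d = t * N + \<delta>" "1 \<le> \<delta>" "\<delta> \<le> N"
  shows "k \<le> (if \<rho> \<le> \<delta>
               then real r * (real s - real t) + real \<rho> - real \<delta>
               else real r * (real s - real t))"
proof -
  let ?S = "info_set N \<rho> s d"
  let ?e = "(N + 1 - max \<delta> \<rho>) + (s - t - 1) * r"
  have "d \<le> n"
    using has_min_dist_le_card[OF assms(11)] by simp
  then have "t * N < s * N" using assms(6,13,14) by linarith
  then have "t < s" by simp
  have "min_dist_ge {1..n} C d"
    using assms(11) unfolding has_min_dist_def min_dist_ge_def by blast
  then have "inj_on (\<lambda>x. restrict x ?S) C"
    using assms(2,3,5,6,12,13,14) by (intro inj_on_restrict_info_set) auto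
  moreover have "?S \<subseteq> {1..n}"
    using assms(6,13,14) by (auto simp: info_set_def)
  ultimately have "card C \<le> q ^ card ?S"
    using card_le_power_if_inj_on_restrict[OF assms(9) _ finite_info_set assms(7)] assms(8)
    by simp
  also have "\<dots> \<le> q ^ ?e"
    using card_info_set_le[of d t N \<delta> s \<rho>] assms(1,2,3,5,13,14) \<open>t < s\<close>
    by (intro power_increasing) simp_all
  finally have "real q powr k \<le> real (q ^ ?e)"
    unfolding assms(10)[symmetric] of_nat_le_iff .
  then have "k \<le> real ?e"
    using assms(1) by (rule le_of_powr_le_power[rotated])
  also have "real ?e = (if \<rho> \<le> \<delta>
               then real r * (real s - real t) + real \<rho> - real \<delta>
               else real r * (real s - real t))"
    using of_nat_bound_eq[OF assms(5) _ assms(15) \<open>t < s\<close>] assms(3) by simp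
  finally show ?thesis .
qed

end
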